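(* Let $m\ge 0$ be an integer, $\mathbf{X}\in\{0,1\}^{(m+1)\times m}$ and $\mathbf{Y}\in\{0,1\}^{m\times(m+1)}$. Then $\mathbb{D}_{1,0}(\mathbf{X})\cap\mathbb{D}_{0,1}(\mathbf{Y})\neq\emptyset$ if and only if $\mathbb{I}_{0,1}(\mathbf{X})\cap\mathbb{I}_{1,0}(\mathbf{Y})\neq\emptyset$.
   Context: For a binary array $\mathbf{X}$, $\mathbb{D}_{t_r,t_c}(\mathbf{X})$ denotes the set of all arrays obtained from $\mathbf{X}$ by deleting any $t_r$ rows and any $t_c$ columns, and $\mathbb{I}_{t_r,t_c}(\mathbf{X})$ the set of all binary arrays obtained from $\mathbf{X}$ by inserting $t_r$ rows and $t_c$ columns (arbitrary binary content, arbitrary positions). *)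

theory Defs
  imports Main
begin

text \<open>A binary array is a triple (r, c, A): r rows, c columns, entries A i j for i < r, j < c.
  Entries outside the range are normalized to False so that equality of triples is
  equality of arrays.\<close>

type_synonym barray = "nat \<times> nat \<times> (nat \<Rightarrow> nat \<Rightarrow> bool)"

definition wf_array :: "barray \<Rightarrow> bool" where
  "wf_array X = (case X of (r, c, A) \<Rightarrow> (\<forall>i j. (i \<ge> r \<or> j \<ge> c) \<longrightarrow> \<not> A i j))"

definition binarrays :: "nat \<Rightarrow> nat \<Rightarrow> barray set" where
  "binarrays r c = {X. wf_array X \<and> fst X = r \<and> fst (snd X) = c}"

definition delete_rc :: "barray \<Rightarrow> nat set \<Rightarrow> nat set \<Rightarrow> barray" where
  "delete_rc X R C = (case X of (r, c, A) \<Rightarrow>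
     (let rs = sorted_list_of_set ({..<r} - R); cs = sorted_list_of_set ({..<c} - C)
      in (length rs, length cs,
          \<lambda>i j. i < length rs \<and> j < length cs \<and> A (rs ! i) (cs ! j))))"

definition Del :: "nat \<Rightarrow> nat \<Rightarrow> barray \<Rightarrow> barray set" where
  "Del tr tc X = (case X of (r, c, A) \<Rightarrow>
     {delete_rc X R C | R C. R \<subseteq> {..<r} \<and> card R = tr \<and> C \<subseteq> {..<c} \<and> card C = tc})"

text \<open>I_{tr,tc}(X): all binary arrays obtained by inserting tr rows and tc columns
  (arbitrary content, arbitrary positions), i.e. arrays Y of size (r+tr) x (c+tc) with
  row positions R and column positions C (|R| = tr, |C| = tc) such that removing the
  inserted rows/columns gives back X.\<close>
definition Ins :: "nat \<Rightarrow> nat \<Rightarrow> barray \<Rightarrow> barray set" where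
  "Ins tr tc X = (case X of (r, c, A) \<Rightarrow>
     {Y \<in> binarrays (r + tr) (c + tc). \<exists>R C. R \<subseteq> {..<r + tr} \<and> card R = tr \<and>
        C \<subseteq> {..<c + tc} \<and> card C = tc \<and> delete_rc Y R C = X})"

end

theory Submission
  imports Defs
begin

text \<open>If X minus row i equals Y minus column j, insert into X at position j the column j
  of Y, with an arbitrary entry in row i: deleting column j gives back X, deleting row i gives
  Y. Conversely, if W yields X by deleting column j and Y by deleting row i, then X minus
  row i and Y minus column j both equal W minus row i and column j, because row and column
  deletions commute.\<close>

definition skip :: "nat \<Rightarrow> nat \<Rightarrow> nat" where
  "skip i k = (if k < i then k else Suc k)"

definition unskip :: "nat \<Rightarrow> nat \<Rightarrow> nat" where
  "unskip i k = (if k < i then k else k - 1)"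

lemma unskip_skip [simp]: "unskip i (skip i k) = k"
  by (simp add: skip_def unskip_def)

lemma skip_unskip: "k \<noteq> i \<Longrightarrow> skip i (unskip i k) = k"
  by (auto simp: skip_def unskip_def)

lemma skip_neq [simp]: "skip i k \<noteq> i"
  by (simp add: skip_def)

lemma skip_less_Suc_iff [simp]: "i < Suc n \<Longrightarrow> skip i k < Suc n \<longleftrightarrow> k < n"
  by (auto simp: skip_def)

lemma unskip_less: "k < Suc n \<Longrightarrow> k \<noteq> i \<Longrightarrow> i < Suc n \<Longrightarrow> unskip i k < n"
  by (auto simp: unskip_def)

lemma sorted_list_of_set_lessThan_remove:
  assumes "i < Suc n"
  shows "sorted_list_of_set ({..<Suc n} - {i}) = map (skip i) [0..<n]"
proof (rule sorted_distinct_set_unique)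
  show "sorted (map (skip i) [0..<n])"
    by (auto simp: sorted_iff_nth_mono skip_def)
  show "distinct (map (skip i) [0..<n])"
    by (simp add: distinct_map inj_on_def) (metis unskip_skip)
  have "{..<Suc n} - {i} = skip i ` {..<n}"
    using assms by (auto simp: image_iff) (metis lessThan_iff skip_unskip unskip_less)
  then show "set (sorted_list_of_set ({..<Suc n} - {i})) = set (map (skip i) [0..<n])"
    by (simp add: atLeast0LessThan)
qed auto

lemma sorted_list_of_set_lessThan: "sorted_list_of_set {..<n} = [0..<n]"
  by (simp add: lessThan_atLeast0)

lemma delete_rc_row:
  assumes "i < Suc r"
  shows "delete_rc (Suc r, c, A) {i} {} = (r, c, \<lambda>a b. a < r \<and> b < c \<and> A (skip i a) b)"
  using assms
  by (auto simp: delete_rc_def sorted_list_of_set_lessThan_remove sorted_list_of_set_lessThan fun_eq_iff)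

lemma delete_rc_column:
  assumes "j < Suc c"
  shows "delete_rc (r, Suc c, A) {} {j} = (r, c, \<lambda>a b. a < r \<and> b < c \<and> A a (skip j b))"
  using assms
  by (auto simp: delete_rc_def sorted_list_of_set_lessThan_remove sorted_list_of_set_lessThan fun_eq_iff)

lemma delete_row_column_commute:
  assumes "i < Suc r" and "j < Suc c"
  shows "delete_rc (delete_rc (Suc r, Suc c, A) {} {j}) {i} {}
       = delete_rc (delete_rc (Suc r, Suc c, A) {i} {}) {} {j}"
  using assms by (simp add: delete_rc_row delete_rc_column fun_eq_iff)

lemma binarrays_iff:
  "(r', c', A) \<in> binarrays r c \<longleftrightarrow> r' = r \<and> c' = c \<and> (\<forall>a b. A a b \<longrightarrow> a < r \<and> b < c)"
  unfolding binarrays_def wf_array_def by (auto simp: not_le) (meson not_le)+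

lemma card_eq_0_subset_lessThan: "C \<subseteq> {..<(n::nat)} \<Longrightarrow> card C = 0 \<longleftrightarrow> C = {}"
  using finite_subset by fastforce

lemma Del_1_0: "Del 1 0 (Suc r, c, A) = {delete_rc (Suc r, c, A) {i} {} | i. i < Suc r}"
  unfolding Del_def by (auto simp: card_eq_0_subset_lessThan card_1_singleton_iff)
    (use card.empty in blast)

lemma Del_0_1: "Del 0 1 (r, Suc c, A) = {delete_rc (r, Suc c, A) {} {j} | j. j < Suc c}"
  unfolding Del_def by (auto simp: card_eq_0_subset_lessThan card_1_singleton_iff)
    (use card.empty in blast)

lemma Ins_0_1:
  "Ins 0 1 (r, c, A) = {W \<in> binarrays r (Suc c). \<exists>j < Suc c. delete_rc W {} {j} = (r, c, A)}"
  unfolding Ins_def by (auto simp: card_eq_0_subset_lessThan card_1_singleton_iff)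
    (use card.empty in blast)

lemma Ins_1_0:
  "Ins 1 0 (r, c, A) = {W \<in> binarrays (Suc r) c. \<exists>i < Suc r. delete_rc W {i} {} = (r, c, A)}"
  unfolding Ins_def by (auto simp: card_eq_0_subset_lessThan card_1_singleton_iff)
    (use card.empty in blast)

lemma common_extension:
  assumes X: "(Suc r, c, A) \<in> binarrays (Suc r) c" and Y: "(r, Suc c, B) \<in> binarrays r (Suc c)"
    and i: "i < Suc r" and j: "j < Suc c"
    and eq: "delete_rc (Suc r, c, A) {i} {} = delete_rc (r, Suc c, B) {} {j}"
  obtains W where "W \<in> binarrays (Suc r) (Suc c)"
    and "delete_rc W {} {j} = (Suc r, c, A)" and "delete_rc W {i} {} = (r, Suc c, B)"
proof
  have A_B: "A (skip i a) b = B a (skip j b)" if "a < r" "b < c" for a b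
    using eq i j that by (simp add: delete_rc_row delete_rc_column fun_eq_iff) meson
  define C where "C a b \<longleftrightarrow> a < Suc r \<and> b < Suc c \<and>
      (if b = j then a \<noteq> i \<and> B (unskip i a) j else A a (unskip j b))" for a b
  show "(Suc r, Suc c, C) \<in> binarrays (Suc r) (Suc c)"
    by (simp add: binarrays_iff C_def)
  show "delete_rc (Suc r, Suc c, C) {} {j} = (Suc r, c, A)"
    using X j by (auto simp: delete_rc_column binarrays_iff fun_eq_iff C_def)
  have "C (skip i a) b = B a b" if "a < r" "b < Suc c" for a b
  proof (cases "b = j")
    case False
    then have "unskip j b < c" and "skip j (unskip j b) = b"
      using that j by (simp_all add: unskip_less skip_unskip)
    then show ?thesis
      using False that i A_B[of a "unskip j b"] by (simp add: C_def)
  qed (use that i in \<open>simp add: C_def\<close>)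
  then show "delete_rc (Suc r, Suc c, C) {i} {} = (r, Suc c, B)"
    using Y i by (auto simp: delete_rc_row binarrays_iff fun_eq_iff)
qed

theorem Del_inter_Del_iff_Ins_inter_Ins:
  assumes X: "X \<in> binarrays (Suc r) c" and Y: "Y \<in> binarrays r (Suc c)"
  shows "Del 1 0 X \<inter> Del 0 1 Y \<noteq> {} \<longleftrightarrow> Ins 0 1 X \<inter> Ins 1 0 Y \<noteq> {}"
proof -
  obtain A B where XA: "X = (Suc r, c, A)" and YB: "Y = (r, Suc c, B)"
    using X Y by (cases X, cases Y) (auto simp: binarrays_def)
  show ?thesis
  proof
    assume "Del 1 0 X \<inter> Del 0 1 Y \<noteq> {}"
    then obtain i j where "i < Suc r" "j < Suc c" "delete_rc X {i} {} = delete_rc Y {} {j}"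
      unfolding XA YB Del_1_0 Del_0_1 by blast
    with X Y obtain W where "W \<in> binarrays (Suc r) (Suc c)"
      and "delete_rc W {} {j} = X" and "delete_rc W {i} {} = Y"
      unfolding XA YB by (rule common_extension)
    with \<open>i < Suc r\<close> \<open>j < Suc c\<close> show "Ins 0 1 X \<inter> Ins 1 0 Y \<noteq> {}"
      unfolding Ins_0_1 Ins_1_0 XA YB by auto
  next
    assume "Ins 0 1 X \<inter> Ins 1 0 Y \<noteq> {}"
    then obtain C i j where "i < Suc r" "j < Suc c"
      and "delete_rc (Suc r, Suc c, C) {} {j} = X" "delete_rc (Suc r, Suc c, C) {i} {} = Y"
      unfolding Ins_0_1 Ins_1_0 XA YB by (auto simp: binarrays_def)
    then have "delete_rc X {i} {} = delete_rc Y {} {j}"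
      using delete_row_column_commute by metis
    with \<open>i < Suc r\<close> \<open>j < Suc c\<close> show "Del 1 0 X \<inter> Del 0 1 Y \<noteq> {}"
      unfolding XA YB Del_1_0 Del_0_1 by blast
  qed
qed

theorem lemma2:
  fixes m :: nat and X Y :: barray
  assumes "X \<in> binarrays (m + 1) m" and "Y \<in> binarrays m (m + 1)"
  shows "Del 1 0 X \<inter> Del 0 1 Y \<noteq> {} \<longleftrightarrow> Ins 0 1 X \<inter> Ins 1 0 Y \<noteq> {}"
  using Del_inter_Del_iff_Ins_inter_Ins[of X m m Y] assms by simp

end
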